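(* Let $\mathfrak S=(S,\xrightarrow{F},\le)$ be an $\infty$-effective complete WSTS, and let $s_0\in S$ be bounded, i.e., such that $Post^*_{\mathfrak S}(s_0)$ is finite. Then the procedure $\mathbf{Clover}_{\mathfrak S}$ terminates on input $s_0$.
   Context: Complete WSTS: $(S,\le)$ a well partial order and continuous dcpo, $F$ a finite set of partial continuous maps (Scott-open domain, preserving lubs of directed subsets of the domain), $s\to f(s)$. $Post$: one-step successors; $Post^*$: reachability set. $F^*$: finite compositions of maps of $F$. Lub-acceleration: $\operatorname{dom}g^\infty=\operatorname{dom}g$, $g^\infty(x)=\bigvee_n g^n(x)$ if $x<g(x)$, else $g(x)$. $\infty$-effective: states finitely coded, $\le$ decidable, maps computable with decidable domains, each $g^\infty$ ($g\in F^*$) computable. Procedure $\mathbf{Clover}_{\mathfrak S}(s_0)$: $A\leftarrow\{s_0\}$; while $Post(A)\not\le^\flat A$ (where $B\le^\flat C$ iff $\downarrow B\subseteq\downarrow C$): choose fairly $(g,a)\in F^*\times A$ with $a\in\operatorname{dom}g$, set $A\leftarrow A\cup\{g^\infty(a)\}$; return $\operatorname{Max}A$. Fair: on every infinite execution, every pair $(g,a)$ with $a$ in the current $A$ and $a\in\operatorname{dom}g$ is picked later. *)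

theory Defs
  imports Main
begin

definition directed :: "'a::order set \<Rightarrow> bool" where
  "directed D \<longleftrightarrow> D \<noteq> {} \<and> (\<forall>x\<in>D. \<forall>y\<in>D. \<exists>z\<in>D. x \<le> z \<and> y \<le> z)"

definition is_lub :: "'a::order set \<Rightarrow> 'a \<Rightarrow> bool" where
  "is_lub D u \<longleftrightarrow> (\<forall>x\<in>D. x \<le> u) \<and> (\<forall>v. (\<forall>x\<in>D. x \<le> v) \<longrightarrow> u \<le> v)"

definition lub :: "'a::order set \<Rightarrow> 'a" where
  "lub D = (THE u. is_lub D u)"

definition dcpo :: "'a::order itself \<Rightarrow> bool" where
  "dcpo _ \<longleftrightarrow> (\<forall>D::'a set. directed D \<longrightarrow> (\<exists>u. is_lub D u))"

definition way_below :: "'a::order \<Rightarrow> 'a \<Rightarrow> bool" where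
  "way_below x y \<longleftrightarrow>
     (\<forall>D. directed D \<longrightarrow> (\<forall>u. is_lub D u \<longrightarrow> y \<le> u \<longrightarrow> (\<exists>d\<in>D. x \<le> d)))"

definition continuous_dcpo :: "'a::order itself \<Rightarrow> bool" where
  "continuous_dcpo T \<longleftrightarrow> dcpo T \<and>
     (\<forall>x::'a. directed {y. way_below y x} \<and> is_lub {y. way_below y x} x)"

definition well_partial_order :: "'a::order itself \<Rightarrow> bool" where
  "well_partial_order _ \<longleftrightarrow> (\<forall>f::nat \<Rightarrow> 'a. \<exists>i j. i < j \<and> f i \<le> f j)"

definition scott_open :: "'a::order set \<Rightarrow> bool" where
  "scott_open U \<longleftrightarrow> (\<forall>x\<in>U. \<forall>y. x \<le> y \<longrightarrow> y \<in> U) \<and>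
     (\<forall>D u. directed D \<longrightarrow> is_lub D u \<longrightarrow> u \<in> U \<longrightarrow> D \<inter> U \<noteq> {})"

definition pdom :: "('a \<Rightarrow> 'b option) \<Rightarrow> 'a set" where
  "pdom f = {x. f x \<noteq> None}"

definition partial_continuous :: "('a::order \<Rightarrow> 'a option) \<Rightarrow> bool" where
  "partial_continuous f \<longleftrightarrow> scott_open (pdom f) \<and>
     (\<forall>D u. D \<subseteq> pdom f \<longrightarrow> directed D \<longrightarrow> is_lub D u \<longrightarrow>
        is_lub ((\<lambda>x. the (f x)) ` D) (the (f u)))"

definition complete_wsts :: "('a::order \<Rightarrow> 'a option) set \<Rightarrow> bool" where
  "complete_wsts F \<longleftrightarrow> well_partial_order TYPE('a) \<and> continuous_dcpo TYPE('a) \<and>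
     finite F \<and> (\<forall>f\<in>F. partial_continuous f)"

definition Post :: "('a \<Rightarrow> 'a option) set \<Rightarrow> 'a set \<Rightarrow> 'a set" where
  "Post F A = {t. \<exists>f\<in>F. \<exists>a\<in>A. f a = Some t}"

inductive_set PostStar :: "('a \<Rightarrow> 'a option) set \<Rightarrow> 'a \<Rightarrow> 'a set"
  for F :: "('a \<Rightarrow> 'a option) set" and s0 :: 'a where
  refl: "s0 \<in> PostStar F s0"
| step: "s \<in> PostStar F s0 \<Longrightarrow> f \<in> F \<Longrightarrow> f s = Some t \<Longrightarrow> t \<in> PostStar F s0"

definition pcomp :: "('a \<Rightarrow> 'a option) \<Rightarrow> ('a \<Rightarrow> 'a option) \<Rightarrow> ('a \<Rightarrow> 'a option)" where
  "pcomp g h = (\<lambda>x. case h x of None \<Rightarrow> None | Some y \<Rightarrow> g y)"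

inductive_set Fstar :: "('a \<Rightarrow> 'a option) set \<Rightarrow> ('a \<Rightarrow> 'a option) set"
  for F :: "('a \<Rightarrow> 'a option) set" where
  base: "f \<in> F \<Longrightarrow> f \<in> Fstar F"
| comp: "g \<in> Fstar F \<Longrightarrow> f \<in> F \<Longrightarrow> pcomp f g \<in> Fstar F"

fun piter :: "nat \<Rightarrow> ('a \<Rightarrow> 'a option) \<Rightarrow> 'a \<Rightarrow> 'a option" where
  "piter 0 g x = Some x"
| "piter (Suc n) g x = (case piter n g x of None \<Rightarrow> None | Some y \<Rightarrow> g y)"

definition accel :: "('a::order \<Rightarrow> 'a option) \<Rightarrow> 'a \<Rightarrow> 'a option" where
  "accel g x = (case g x of None \<Rightarrow> None
     | Some y \<Rightarrow> if x < y then Some (lub {z. \<exists>n. piter n g x = Some z}) else Some y)"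

definition below_flat :: "'a::order set \<Rightarrow> 'a set \<Rightarrow> bool" where
  "below_flat B C \<longleftrightarrow> {x. \<exists>b\<in>B. x \<le> b} \<subseteq> {x. \<exists>c\<in>C. x \<le> c}"

text \<open>An infinite execution of Clover on s0: a sequence of sets A n together with
the chosen pairs (g, a) at each loop iteration; the loop guard holds at every
iteration (otherwise the procedure would have returned).\<close>
definition clover_infinite_run ::
  "('a::order \<Rightarrow> 'a option) set \<Rightarrow> 'a \<Rightarrow> (nat \<Rightarrow> 'a set) \<Rightarrow>
   (nat \<Rightarrow> ('a \<Rightarrow> 'a option) \<times> 'a) \<Rightarrow> bool" where
  "clover_infinite_run F s0 A c \<longleftrightarrow>
     A 0 = {s0} \<and>
     (\<forall>n. \<not> below_flat (Post F (A n)) (A n) \<and>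
          fst (c n) \<in> Fstar F \<and> snd (c n) \<in> A n \<and> snd (c n) \<in> pdom (fst (c n)) \<and>
          A (Suc n) = A n \<union> {the (accel (fst (c n)) (snd (c n)))})"

definition clover_fair ::
  "('a \<Rightarrow> 'a option) set \<Rightarrow> (nat \<Rightarrow> 'a set) \<Rightarrow> (nat \<Rightarrow> ('a \<Rightarrow> 'a option) \<times> 'a) \<Rightarrow> bool" where
  "clover_fair F A c \<longleftrightarrow>
     (\<forall>n. \<forall>g\<in>Fstar F. \<forall>a\<in>A n. a \<in> pdom g \<longrightarrow> (\<exists>m\<ge>n. c m = (g, a)))"

definition clover_terminates :: "('a::order \<Rightarrow> 'a option) set \<Rightarrow> 'a \<Rightarrow> bool" where
  "clover_terminates F s0 \<longleftrightarrow> (\<nexists>A c. clover_infinite_run F s0 A c \<and> clover_fair F A c)"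

end

theory Submission
  imports Defs
begin

text \<open>Every map of \<open>F\<^sup>*\<close> is monotone, so when \<open>a < g a\<close> the iterates \<open>g\<^sup>n a\<close>
form a chain of states reachable from \<open>s\<^sub>0\<close>. As the reachability set is finite, the chain
attains its maximum, which is therefore its lub: \<open>g\<^sup>\<infinity> a\<close> is again reachable and dominates
\<open>g a\<close>. Hence an infinite run of Clover only ever adds reachable states, so its increasing
sequence of sets \<open>A\<^sub>n\<close> is eventually constant, say equal to \<open>A\<^sub>N\<close>. By fairness every pair
\<open>(f, a)\<close> with \<open>f \<in> F\<close>, \<open>a \<in> A\<^sub>N\<close> is picked after stage \<open>N\<close>, which puts \<open>f\<^sup>\<infinity> a \<ge> f a\<close>
into \<open>A\<^sub>N\<close>; so \<open>Post(A\<^sub>N) \<le>\<^sup>\<flat> A\<^sub>N\<close> and the loop guard fails.\<close>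

definition partial_mono :: "('a::order \<Rightarrow> 'a option) \<Rightarrow> bool" where
  "partial_mono g \<longleftrightarrow> (\<forall>x y gx. x \<le> y \<longrightarrow> g x = Some gx \<longrightarrow> (\<exists>gy. g y = Some gy \<and> gx \<le> gy))"

lemma mono_finite_range_has_greatest:
  fixes s :: "nat \<Rightarrow> 'a::order"
  assumes "mono s" and "finite (range s)"
  obtains N where "\<And>k. s k \<le> s N"
proof -
  have "finite (inv s ` range s)" using assms(2) by (rule finite_imageI)
  then obtain N where N: "\<forall>i \<in> inv s ` range s. i \<le> N"
    unfolding finite_nat_set_iff_bounded_le ..
  have "s k \<le> s N" for k
  proof -
    have "s k = s (inv s (s k))" by (simp add: f_inv_into_f)
    also have "\<dots> \<le> s N" using N assms(1) by (simp add: monoD)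
    finally show ?thesis .
  qed
  then show thesis using that by blast
qed

lemma lub_eqI: "is_lub D u \<Longrightarrow> lub D = u"
  unfolding lub_def by (rule the_equality) (auto simp: is_lub_def intro: order_antisym)

lemma partial_continuous_imp_mono:
  assumes "partial_continuous g"
  shows "partial_mono g"
  unfolding partial_mono_def
proof (intro allI impI)
  fix x y gx assume xy: "x \<le> y" and gx: "g x = Some gx"
  have x: "x \<in> pdom g" using gx by (simp add: pdom_def)
  with assms xy have y: "y \<in> pdom g"
    unfolding partial_continuous_def scott_open_def by blast
  then obtain gy where gy: "g y = Some gy" by (auto simp: pdom_def)
  have "directed {x, y}" and "is_lub {x, y} y"
    unfolding directed_def is_lub_def using xy by auto
  moreover have "{x, y} \<subseteq> pdom g" using x y by simp
  ultimately have "is_lub ((\<lambda>x. the (g x)) ` {x, y}) (the (g y))"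
    using assms unfolding partial_continuous_def by (metis (no_types, lifting))
  then have "gx \<le> gy" using gx gy unfolding is_lub_def by auto
  with gy show "\<exists>gy. g y = Some gy \<and> gx \<le> gy" by blast
qed

lemma partial_mono_pcomp: "partial_mono f \<Longrightarrow> partial_mono g \<Longrightarrow> partial_mono (pcomp f g)"
  unfolding partial_mono_def pcomp_def by (fastforce split: option.splits)

lemma Fstar_partial_mono:
  assumes "\<And>f. f \<in> F \<Longrightarrow> partial_mono f" and "g \<in> Fstar F"
  shows "partial_mono g"
  using assms(2) by induction (use assms(1) partial_mono_pcomp in blast)+

lemma complete_wsts_Fstar_mono: "complete_wsts F \<Longrightarrow> g \<in> Fstar F \<Longrightarrow> partial_mono g"
  unfolding complete_wsts_def by (blast intro: Fstar_partial_mono partial_continuous_imp_mono)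

lemma Fstar_PostStar_closed:
  assumes "g \<in> Fstar F" and "a \<in> PostStar F s0" and "g a = Some b"
  shows "b \<in> PostStar F s0"
  using assms
proof (induction arbitrary: a b)
  case (base f)
  then show ?case by (blast intro: PostStar.step)
next
  case (comp g f)
  then obtain c where "g a = Some c" and "f c = Some b"
    by (auto simp: pcomp_def split: option.splits)
  with comp show ?case by (blast intro: PostStar.step)
qed

lemma piter_invariant:
  assumes closed: "\<And>x y. x \<in> P \<Longrightarrow> g x = Some y \<Longrightarrow> y \<in> P" and "a \<in> P"
  shows "piter n g a = Some z \<Longrightarrow> z \<in> P"
proof (induction n arbitrary: z)
  case 0
  then show ?case using \<open>a \<in> P\<close> by simp
next
  case (Suc n)
  then obtain x where "piter n g a = Some x" and "g x = Some z"
    by (auto split: option.splits)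
  with Suc.IH closed show ?case by blast
qed

lemma piter_increasing:
  assumes "partial_mono g" and "g a = Some y" and "a \<le> y"
  obtains s where "\<And>n. piter n g a = Some (s n)" and "mono s"
proof -
  have chain: "\<exists>z z'. piter n g a = Some z \<and> g z = Some z' \<and> z \<le> z'" for n
  proof (induction n)
    case 0
    then show ?case using assms(2,3) by simp
  next
    case (Suc n)
    then obtain z z' where "piter n g a = Some z" and "g z = Some z'" and "z \<le> z'" by blast
    moreover obtain z'' where "g z' = Some z''" and "z' \<le> z''"
      using assms(1) \<open>g z = Some z'\<close> \<open>z \<le> z'\<close> unfolding partial_mono_def by blast
    ultimately show ?case by auto
  qed
  define s where "s n = the (piter n g a)" for n
  have "piter n g a = Some (s n)" and "s n \<le> s (Suc n)" for n
    using chain[of n] by (auto simp: s_def)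
  then show thesis using that by (simp add: mono_iff_le_Suc)
qed

lemma accel_in_finite_invariant:
  assumes "partial_mono g" and "finite P"
    and closed: "\<And>x y. x \<in> P \<Longrightarrow> g x = Some y \<Longrightarrow> y \<in> P"
    and "a \<in> P" and ga: "g a = Some y"
  shows "\<exists>z. accel g a = Some z \<and> z \<in> P \<and> y \<le> z"
proof (cases "a < y")
  case False
  then show ?thesis using ga closed \<open>a \<in> P\<close> by (simp add: accel_def)
next
  case True
  then obtain s where s: "\<And>n. piter n g a = Some (s n)" and "mono s"
    using piter_increasing assms(1) ga by (metis less_imp_le)
  have "range s \<subseteq> P"
  proof clarify
    fix n show "s n \<in> P" using piter_invariant[of P g, OF closed \<open>a \<in> P\<close> s] .
  qed
  with \<open>finite P\<close> obtain N where N: "\<And>k. s k \<le> s N"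
    using mono_finite_range_has_greatest[OF \<open>mono s\<close>] finite_subset by blast
  have "{z. \<exists>n. piter n g a = Some z} = range s" using s by auto
  moreover have "is_lub (range s) (s N)" using N unfolding is_lub_def by auto
  ultimately have "accel g a = Some (s N)" using ga True by (simp add: accel_def lub_eqI)
  moreover have "y \<le> s N" using N[of 1] s[of 1] ga by simp
  ultimately show ?thesis using \<open>range s \<subseteq> P\<close> by blast
qed

lemma accel_reachable:
  assumes "complete_wsts F" and "finite (PostStar F s0)"
    and "g \<in> Fstar F" and "a \<in> PostStar F s0" and "g a = Some y"
  shows "\<exists>z. accel g a = Some z \<and> z \<in> PostStar F s0 \<and> y \<le> z"
  using assms by (blast intro: accel_in_finite_invariant complete_wsts_Fstar_mono
      Fstar_PostStar_closed)

lemma clover_infinite_run_step: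
  assumes "clover_infinite_run F s0 A c" and "c n = (g, a)"
  shows "g \<in> Fstar F" and "a \<in> A n" and "a \<in> pdom g"
    and "A (Suc n) = A n \<union> {the (accel g a)}"
  using assms unfolding clover_infinite_run_def by (metis fst_conv snd_conv)+

lemma clover_run_reachable:
  assumes "complete_wsts F" and "finite (PostStar F s0)" and run: "clover_infinite_run F s0 A c"
  shows "A n \<subseteq> PostStar F s0"
proof (induction n)
  case 0
  then show ?case using run by (simp add: clover_infinite_run_def PostStar.refl)
next
  case (Suc n)
  obtain g a where c: "c n = (g, a)" by fastforce
  note step = clover_infinite_run_step[OF run c]
  then obtain y where "g a = Some y" by (auto simp: pdom_def)
  with step Suc obtain z where "accel g a = Some z" and "z \<in> PostStar F s0"
    using accel_reachable[OF assms(1,2)] by blast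
  with step(4) Suc show ?case by simp
qed

theorem lemma5p7:
  fixes F :: "('a::order \<Rightarrow> 'a option) set" and s0 :: 'a
  assumes "complete_wsts F"
    and "finite (PostStar F s0)"
  shows "clover_terminates F s0"
  unfolding clover_terminates_def
proof clarify
  fix A c assume run: "clover_infinite_run F s0 A c" and fair: "clover_fair F A c"
  note step = clover_infinite_run_step[OF run]
  have "mono A"
    unfolding mono_iff_le_Suc using step(4)[OF prod.collapse[symmetric]] by blast
  moreover have "finite (range A)"
    using clover_run_reachable[OF assms run] assms(2) by (blast intro: finite_subset[of _ "Pow _"])
  ultimately obtain N where N: "\<And>k. A k \<subseteq> A N" by (metis mono_finite_range_has_greatest)
  have "below_flat (Post F (A N)) (A N)"
    unfolding below_flat_def Post_def
  proof clarify
    fix x b f a assume "x \<le> b" "f \<in> F" "a \<in> A N" "f a = Some b"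
    moreover from this obtain m where "c m = (f, a)"
      using fair Fstar.base unfolding clover_fair_def pdom_def by blast
    moreover obtain z where "accel f a = Some z" "b \<le> z"
      using accel_reachable[OF assms Fstar.base] calculation clover_run_reachable[OF assms run] by blast
    ultimately have "z \<in> A N" "x \<le> z" using N[of "Suc m"] step(4) by auto
    then show "\<exists>c\<in>A N. x \<le> c" by blast
  qed
  then show False using run by (simp add: clover_infinite_run_def)
qed

end
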